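(* Let $\mathfrak g$ be a complex semisimple Lie algebra, $\mathfrak h \subset \mathfrak g$ a Cartan subalgebra, and $\rho : \mathfrak g \to \mathrm{End}(W)$ a finite-dimensional representation. Then $W \otimes \mathfrak g$ is generated, as a $\mathfrak g$-module, by $W \otimes \mathfrak h$.
   Context: $W \otimes \mathfrak g$ is a $\mathfrak g$-module via $(\rho\otimes \mathrm{ad})(\xi)(w\otimes \eta) = \rho(\xi)w \otimes \eta + w \otimes [\xi,\eta]$. *)

theory Defs
  imports "HOL-Analysis.Analysis"
begin

text \<open>Concrete model: a finite-dimensional complex Lie algebra is a Lie subalgebra
  g of gl_n(C) = complex^'n^'n (every semisimple one embeds faithfully via ad). W \<otimes> gl_n is realised as complex^'n^'n^'m, and
  W \<otimes> g as the complex span of the pure tensors w \<otimes> x with x in g.\<close>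

type_synonym 'n mat = "complex^'n^'n"

definition mscale :: "complex \<Rightarrow> 'n::finite mat \<Rightarrow> 'n mat" where
  "mscale c M = (\<chi> i j. c * M$i$j)"

definition tscale :: "complex \<Rightarrow> complex^'n^'n^'m \<Rightarrow> complex^'n^'n^'m" where
  "tscale c T = (\<chi> k. mscale c (T$k))"

definition comm :: "'n::finite mat \<Rightarrow> 'n mat \<Rightarrow> 'n mat" where
  "comm x y = x ** y - y ** x"

definition lie_subalgebra :: "'n::finite mat set \<Rightarrow> bool" where
  "lie_subalgebra g \<longleftrightarrow> module.subspace mscale g \<and> (\<forall>x\<in>g. \<forall>y\<in>g. comm x y \<in> g)"

definition brk :: "'n::finite mat set \<Rightarrow> 'n mat set \<Rightarrow> 'n mat set" where
  "brk A B = module.span mscale {comm a b | a b. a \<in> A \<and> b \<in> B}"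

definition lie_ideal :: "'n::finite mat set \<Rightarrow> 'n mat set \<Rightarrow> bool" where
  "lie_ideal I g \<longleftrightarrow> module.subspace mscale I \<and> I \<subseteq> g \<and> (\<forall>x\<in>g. \<forall>y\<in>I. comm x y \<in> I)"

fun derived_series :: "'n::finite mat set \<Rightarrow> nat \<Rightarrow> 'n mat set" where
  "derived_series L 0 = L"
| "derived_series L (Suc k) = brk (derived_series L k) (derived_series L k)"

fun lower_central_series :: "'n::finite mat set \<Rightarrow> nat \<Rightarrow> 'n mat set" where
  "lower_central_series L 0 = L"
| "lower_central_series L (Suc k) = brk L (lower_central_series L k)"

definition solvable :: "'n::finite mat set \<Rightarrow> bool" where
  "solvable L \<longleftrightarrow> (\<exists>k. derived_series L k = {0})"

definition nilpotent :: "'n::finite mat set \<Rightarrow> bool" where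
  "nilpotent L \<longleftrightarrow> (\<exists>k. lower_central_series L k = {0})"

definition semisimple :: "'n::finite mat set \<Rightarrow> bool" where
  "semisimple g \<longleftrightarrow> lie_subalgebra g \<and> (\<forall>I. lie_ideal I g \<and> solvable I \<longrightarrow> I = {0})"

definition normalizer :: "'n::finite mat set \<Rightarrow> 'n mat set \<Rightarrow> 'n mat set" where
  "normalizer g h = {x \<in> g. \<forall>y\<in>h. comm x y \<in> h}"

definition cartan_subalgebra :: "'n::finite mat set \<Rightarrow> 'n mat set \<Rightarrow> bool" where
  "cartan_subalgebra h g \<longleftrightarrow> lie_subalgebra h \<and> h \<subseteq> g \<and> nilpotent h \<and> normalizer g h = h"

definition lie_rep :: "'n::finite mat set \<Rightarrow> ('n mat \<Rightarrow> 'm::finite mat) \<Rightarrow> bool" where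
  "lie_rep g \<rho> \<longleftrightarrow>
     (\<forall>x\<in>g. \<forall>y\<in>g. \<rho> (x + y) = \<rho> x + \<rho> y) \<and>
     (\<forall>c. \<forall>x\<in>g. \<rho> (mscale c x) = mscale c (\<rho> x)) \<and>
     (\<forall>x\<in>g. \<forall>y\<in>g. \<rho> (comm x y) = comm (\<rho> x) (\<rho> y))"

definition tens :: "complex^'m \<Rightarrow> 'n::finite mat \<Rightarrow> complex^'n^'n^'m" where
  "tens w x = (\<chi> k. mscale (w$k) x)"

definition tensor_space :: "'n::finite mat set \<Rightarrow> (complex^'n^'n^'m::finite) set" where
  "tensor_space L = module.span tscale {tens w x | w x. x \<in> L}"

text \<open>Action (\<rho> \<otimes> ad)(x): on pure tensors w \<otimes> y it gives \<rho>(x)w \<otimes> y + w \<otimes> [x,y].\<close>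
definition tact :: "('n::finite mat \<Rightarrow> 'm::finite mat) \<Rightarrow> 'n mat \<Rightarrow> complex^'n^'n^'m \<Rightarrow> complex^'n^'n^'m" where
  "tact \<rho> x T = (\<chi> k. (\<Sum>j\<in>UNIV. mscale ((\<rho> x)$k$j) (T$j)) + comm x (T$k))"

definition generated_submodule ::
  "'n::finite mat set \<Rightarrow> ('n mat \<Rightarrow> 'm::finite mat) \<Rightarrow> (complex^'n^'n^'m) set \<Rightarrow> (complex^'n^'n^'m) set" where
  "generated_submodule g \<rho> X =
     \<Inter>{S. module.subspace tscale S \<and> X \<subseteq> S \<and> (\<forall>x\<in>g. \<forall>T\<in>S. tact \<rho> x T \<in> S)}"

end

theory Submission
  imports Defs
begin

text \<open>Let S be a g-submodule of W \<otimes> g containing W \<otimes> h. The matrices y with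
  W \<otimes> y \<subseteq> S form a subspace G containing h. For a \<in> h and v \<in> g the action of v on
  w \<otimes> a is \<rho>(v)w \<otimes> a + w \<otimes> [v,a], whose first summand already lies in W \<otimes> h, so G also
  contains [h,g].

  The identity E \<subseteq> h + [h,E] is proved for every ad h-invariant subspace E of g by induction
  on dim E. If some x \<in> h does not act nilpotently on E, the Fitting decomposition
  E = E_0(x) + (ad x)^K E splits E into the generalized null space E_0(x), which is a smaller
  h-invariant subspace, and a part contained in [h,E]. If every x \<in> h acts nilpotently on E,
  an Engel-type argument along the lower central series of h finds, whenever E \<not>\<subseteq> h, an
  element of E \<setminus> h that normalizes h, contradicting self-normalization.\<close>

interpretation M: vector_space "mscale :: complex \<Rightarrow> 'n::finite mat \<Rightarrow> 'n mat"
  by unfold_locales (simp_all add: mscale_def vec_eq_iff algebra_simps)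

interpretation T: vector_space "tscale :: complex \<Rightarrow> complex^'n::finite^'n^'m::finite \<Rightarrow> _"
  by unfold_locales (simp_all add: tscale_def mscale_def vec_eq_iff algebra_simps)

definition matrix_unit :: "'n \<Rightarrow> 'n \<Rightarrow> 'n::finite mat" where
  "matrix_unit a b = (\<chi> i j. if i = a \<and> j = b then 1 else 0)"

lemma matrix_eq_sum_matrix_units:
  "(A::'n::finite mat) = (\<Sum>(a, b)\<in>UNIV. mscale (A$a$b) (matrix_unit a b))"
proof -
  have "(\<Sum>(a, b)\<in>UNIV. mscale (A$a$b) (matrix_unit a b)) $ i $ j
      = (\<Sum>p\<in>UNIV. if p = (i, j) then A$i$j else 0)" for i j
    unfolding sum_component by (rule sum.cong) (auto simp: mscale_def matrix_unit_def split: if_splits)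
  then show ?thesis by (simp add: vec_eq_iff)
qed

lemma span_matrix_units: "M.span (range (case_prod matrix_unit)) = (UNIV :: 'n::finite mat set)"
proof -
  have "A \<in> M.span (range (case_prod matrix_unit))" for A :: "'n mat"
    by (subst matrix_eq_sum_matrix_units, unfold split_beta)
      (intro M.span_sum M.span_scale M.span_base rangeI)
  then show ?thesis by auto
qed

lemma finite_basis_mat_exists:
  "\<exists>B. finite B \<and> M.independent B \<and> M.span B = (UNIV :: 'n::finite mat set)"
proof -
  obtain B :: "'n mat set" where B: "B \<subseteq> range (case_prod matrix_unit)" "M.independent B"
    "range (case_prod matrix_unit) \<subseteq> M.span B"
    by (rule M.maximal_independent_subset)
  have "finite B" using B(1) by (rule finite_subset) simp
  moreover have "M.span B = UNIV"
    using M.span_minimal[OF B(3) M.subspace_span] span_matrix_units by auto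
  ultimately show ?thesis using B(2) by blast
qed

definition mat_basis :: "'n::finite mat set" where
  "mat_basis = (SOME B. finite B \<and> M.independent B \<and> M.span B = UNIV)"

interpretation MF: finite_dimensional_vector_space "mscale :: complex \<Rightarrow> 'n::finite mat \<Rightarrow> 'n mat" mat_basis
  using someI_ex[OF finite_basis_mat_exists] unfolding mat_basis_def[symmetric]
  by unfold_locales auto

lemma matrix_add_rdistrib: "((A::'n::finite mat) + B) ** C = A ** C + B ** C"
  by (vector matrix_matrix_mult_def sum.distrib[symmetric] field_simps)

lemma matrix_diff_rdistrib: "((A::'n::finite mat) - B) ** C = A ** C - B ** C"
  by (vector matrix_matrix_mult_def sum_subtractf[symmetric] field_simps)

lemma matrix_diff_ldistrib: "(A::'n::finite mat) ** (B - C) = A ** B - A ** C"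
  by (vector matrix_matrix_mult_def sum_subtractf[symmetric] field_simps)

lemma matrix_mult_mscale_left: "mscale c (A::'n::finite mat) ** B = mscale c (A ** B)"
  by (vector matrix_matrix_mult_def mscale_def sum_distrib_left field_simps)

lemma matrix_mult_mscale_right: "(A::'n::finite mat) ** mscale c B = mscale c (A ** B)"
  by (vector matrix_matrix_mult_def mscale_def sum_distrib_left field_simps)

lemma comm_swap: "comm a b = - comm b a"
  by (simp add: comm_def)

lemma comm_add_right: "comm x (a + b) = comm x a + comm x b"
  by (simp add: comm_def matrix_add_ldistrib matrix_add_rdistrib)

lemma comm_add_left: "comm (a + b) x = comm a x + comm b x"
  by (simp add: comm_def matrix_add_ldistrib matrix_add_rdistrib)

lemma comm_mscale_right: "comm x (mscale c a) = mscale c (comm x a)"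
  by (simp add: comm_def matrix_mult_mscale_left matrix_mult_mscale_right M.scale_right_diff_distrib)

lemma comm_mscale_left: "comm (mscale c a) x = mscale c (comm a x)"
  by (simp add: comm_def matrix_mult_mscale_left matrix_mult_mscale_right M.scale_right_diff_distrib)

lemma comm_0_right [simp]: "comm x 0 = 0"
  and comm_0_left [simp]: "comm 0 x = 0"
  by (simp_all add: comm_def)

lemma comm_jacobi: "comm x (comm y v) = comm y (comm x v) + comm (comm x y) (v::'n::finite mat)"
  by (simp add: comm_def matrix_diff_ldistrib matrix_diff_rdistrib matrix_mul_assoc algebra_simps)

lemma module_hom_comm_power: "module_hom mscale mscale (comm (x::'n::finite mat) ^^ k)"
proof (induction k)
  case 0
  show ?case using M.linear_id by (simp add: module_hom_iff_linear id_def)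
next
  case (Suc k)
  have "module_hom mscale mscale (comm x)"
    by (simp add: module_hom_iff M.module_axioms comm_add_right comm_mscale_right)
  with Suc show ?case unfolding funpow.simps(2) by (rule module_hom_compose)
qed

section \<open>An Engel-type lemma for nilpotent subalgebras\<close>

definition ad_invariant :: "'n::finite mat set \<Rightarrow> 'n mat set \<Rightarrow> bool" where
  "ad_invariant K E \<longleftrightarrow> (\<forall>x\<in>K. \<forall>v\<in>E. comm x v \<in> E)"

definition gen_null_space :: "'n::finite mat \<Rightarrow> 'n mat set \<Rightarrow> 'n mat set" where
  "gen_null_space x E = {v\<in>E. \<exists>k. (comm x ^^ k) v = 0}"

lemma comm_power_in_invariant:
  "ad_invariant {x} E \<Longrightarrow> v \<in> E \<Longrightarrow> (comm x ^^ k) v \<in> E"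
  by (induction k) (auto simp: ad_invariant_def)

lemma comm_power_eq_0_mono:
  assumes "(comm (x::'n::finite mat) ^^ k) v = 0" "k \<le> n"
  shows "(comm x ^^ n) v = 0"
proof -
  have "(comm x ^^ n) v = (comm x ^^ (n - k)) ((comm x ^^ k) v)"
    using assms(2) by (metis funpow_add le_add_diff_inverse2 o_apply)
  then show ?thesis using assms(1) module_hom.zero[OF module_hom_comm_power] by simp
qed

lemma comm_in_subspace_span_left:
  assumes "M.subspace S" "\<forall>y\<in>K. comm y v \<in> S" "x \<in> M.span K"
  shows "comm x v \<in> S"
proof -
  have "M.subspace {y. comm y v \<in> S}"
    using assms(1) by (auto intro!: M.subspaceI simp: comm_add_left comm_mscale_left
        M.subspace_add M.subspace_scale M.subspace_0)
  then have "M.span K \<subseteq> {y. comm y v \<in> S}"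
    using assms(2) by (intro M.span_minimal) auto
  then show ?thesis using assms(3) by blast
qed

lemma lie_subalgebra_comm_power:
  "lie_subalgebra h \<Longrightarrow> x \<in> h \<Longrightarrow> y \<in> h \<Longrightarrow> (comm x ^^ k) y \<in> h"
  by (induction k) (auto simp: lie_subalgebra_def)

lemma lower_central_series_subset:
  assumes "lie_subalgebra h"
  shows "lower_central_series h i \<subseteq> h"
proof (induction i)
  case (Suc i)
  then show ?case
    unfolding lower_central_series.simps brk_def
    by (intro M.span_minimal) (use assms in \<open>auto simp: lie_subalgebra_def\<close>)
qed simp

lemma comm_in_lower_central_series_Suc:
  "x \<in> h \<Longrightarrow> y \<in> lower_central_series h i \<Longrightarrow> comm x y \<in> lower_central_series h (Suc i)"
  by (auto simp: brk_def intro: M.span_base)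

lemma lower_central_series_Suc_subset:
  assumes "lie_subalgebra h"
  shows "lower_central_series h (Suc i) \<subseteq> lower_central_series h i"
proof (induction i)
  case 0
  then show ?case using lower_central_series_subset[OF assms, of 1] by simp
next
  case (Suc i)
  then show ?case unfolding lower_central_series.simps brk_def
    by (intro M.span_mono) blast
qed

lemma comm_power_in_lower_central_series:
  "x \<in> h \<Longrightarrow> y \<in> h \<Longrightarrow> (comm x ^^ i) y \<in> lower_central_series h i"
  using comm_in_lower_central_series_Suc by (induction i) auto

lemma nilpotent_comm_power_eq_0:
  assumes "nilpotent h" "x \<in> h" "y \<in> h"
  obtains c where "(comm x ^^ c) y = 0"
  using assms comm_power_in_lower_central_series unfolding nilpotent_def by blast

lemma exists_killed_mod_insert:
  fixes h :: "'n::finite mat set"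
  assumes h: "lie_subalgebra h"
    and E: "ad_invariant h E" "\<forall>x\<in>h. gen_null_space x E = E"
    and w: "w \<in> E" "w \<notin> h" "\<forall>x\<in>K. comm x w \<in> h"
    and z: "z \<in> h" "\<forall>y\<in>K. comm z y \<in> M.span K"
  shows "\<exists>w'\<in>E. w' \<notin> h \<and> (\<forall>x\<in>insert z K. comm x w' \<in> h)"
proof -
  have hsub: "M.subspace h" and hcl: "\<forall>x\<in>h. \<forall>y\<in>h. comm x y \<in> h"
    using h by (auto simp: lie_subalgebra_def)
  define V where "V = {v\<in>E. \<forall>x\<in>K. comm x v \<in> h}"
  have "comm z v \<in> V" if v: "v \<in> V" for v
  proof -
    have vK: "\<forall>y\<in>K. comm y v \<in> h" using v by (simp add: V_def)
    have "comm y (comm z v) \<in> h" if y: "y \<in> K" for y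
    proof -
      have "comm z (comm y v) \<in> h" using vK y z(1) hcl by blast
      moreover have "comm y z \<in> M.span K"
        using M.span_neg[of "comm z y" K] y z(2) by (simp add: comm_swap[of y z])
      then have "comm (comm y z) v \<in> h" by (rule comm_in_subspace_span_left[OF hsub vK])
      ultimately show ?thesis
        using comm_jacobi[of y z v] M.subspace_add[OF hsub] by simp
    qed
    moreover have "comm z v \<in> E" using v E(1) z(1) by (simp add: V_def ad_invariant_def)
    ultimately show ?thesis by (simp add: V_def)
  qed
  then have "ad_invariant {z} V" by (simp add: ad_invariant_def)
  then have V_power: "(comm z ^^ k) v \<in> V" if "v \<in> V" for v k
    using that by (rule comm_power_in_invariant)
  have "w \<in> gen_null_space z E" using E(2) z(1) w(1) by simp
  then obtain j where "(comm z ^^ j) w = 0" by (auto simp: gen_null_space_def)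
  then have "\<exists>k. (comm z ^^ k) w \<in> h"
    using M.subspace_0[OF hsub] by (intro exI[of _ j]) simp
  txt \<open>V is ad z-invariant, so the last iterate of ad z on w outside h is the witness.\<close>
  define k where "k = (LEAST k. (comm z ^^ k) w \<in> h)"
  have k_in: "(comm z ^^ k) w \<in> h"
    unfolding k_def by (rule LeastI_ex) fact
  then have "k \<noteq> 0" using w(2) by (intro notI) simp
  then obtain k' where k': "k = Suc k'" using not0_implies_Suc by blast
  define w' where "w' = (comm z ^^ k') w"
  have "w' \<notin> h"
    unfolding w'_def by (rule not_less_Least) (simp add: k_def[symmetric] k')
  moreover have "comm z w' \<in> h"
    using k_in by (simp add: w'_def k')
  moreover have "w' \<in> V"
    unfolding w'_def using w by (intro V_power) (simp add: V_def)
  ultimately show ?thesis unfolding V_def by blast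
qed

lemma exists_killed_mod_lower_central_series_step:
  fixes h :: "'n::finite mat set"
  assumes h: "lie_subalgebra h"
    and E: "ad_invariant h E" "\<forall>x\<in>h. gen_null_space x E = E"
    and Suc_i: "\<exists>w\<in>E. w \<notin> h \<and> (\<forall>x\<in>lower_central_series h (Suc i). comm x w \<in> h)"
  shows "\<exists>w\<in>E. w \<notin> h \<and> (\<forall>x\<in>lower_central_series h i. comm x w \<in> h)"
proof -
  let ?Q = "\<lambda>K. \<exists>w\<in>E. w \<notin> h \<and> (\<forall>x\<in>K. comm x w \<in> h)"
  let ?L = "lower_central_series h"
  have L_i_h: "?L i \<subseteq> h" and L_Suc_i: "?L (Suc i) \<subseteq> ?L i"
    using lower_central_series_subset[OF h] lower_central_series_Suc_subset[OF h] by auto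
  obtain B where B: "B \<subseteq> ?L i" "M.independent B" "?L i \<subseteq> M.span B"
    by (rule M.maximal_independent_subset)
  txt \<open>Since [?L i, ?L i] \<subseteq> ?L (Suc i), basis elements of ?L i can be added one at a time.\<close>
  have "?Q (?L (Suc i) \<union> Z)" if "finite Z" "Z \<subseteq> ?L i" for Z
    using that
  proof (induction Z rule: finite_induct)
    case empty
    then show ?case using Suc_i by simp
  next
    case (insert z Z)
    obtain w where w: "w \<in> E" "w \<notin> h" "\<forall>x\<in>?L (Suc i) \<union> Z. comm x w \<in> h"
      using insert by auto
    have z: "z \<in> h" using insert.prems L_i_h by blast
    have "comm z y \<in> M.span (?L (Suc i) \<union> Z)" if "y \<in> ?L (Suc i) \<union> Z" for y
      using that insert.prems L_Suc_i z
      by (intro M.span_base UnI1 comm_in_lower_central_series_Suc) auto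
    then have "?Q (insert z (?L (Suc i) \<union> Z))"
      by (intro exists_killed_mod_insert[OF h E w z]) blast
    then show ?case by simp
  qed
  note killed_Z = this
  obtain w where w: "w \<in> E" "w \<notin> h" "\<forall>x\<in>?L (Suc i) \<union> B. comm x w \<in> h"
    using killed_Z[OF MF.finiteI_independent[OF B(2)] B(1)] by blast
  have "?Q (M.span (?L (Suc i) \<union> B))"
    using w h comm_in_subspace_span_left[of h "?L (Suc i) \<union> B" w]
    by (auto simp: lie_subalgebra_def)
  moreover have "?L i \<subseteq> M.span (?L (Suc i) \<union> B)"
    using B(3) M.span_mono[of B "?L (Suc i) \<union> B"] by blast
  ultimately show ?thesis by blast
qed

lemma exists_normalizing_mod:
  fixes h :: "'n::finite mat set"
  assumes h: "lie_subalgebra h" "nilpotent h"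
    and E: "ad_invariant h E" "\<forall>x\<in>h. gen_null_space x E = E"
    and v: "v \<in> E" "v \<notin> h"
  shows "\<exists>w\<in>E. w \<notin> h \<and> (\<forall>x\<in>h. comm x w \<in> h)"
proof -
  let ?Q = "\<lambda>i. \<exists>w\<in>E. w \<notin> h \<and> (\<forall>x\<in>lower_central_series h i. comm x w \<in> h)"
  obtain c where c: "lower_central_series h c = {0}"
    using h(2) unfolding nilpotent_def by blast
  have "?Q i" if "i \<le> c" for i
    using that
  proof (induction rule: inc_induct)
    case base
    then show ?case using c v h(1) M.subspace_0 by (auto simp: lie_subalgebra_def)
  next
    case (step i)
    then show ?case using exists_killed_mod_lower_central_series_step[OF h(1) E] by blast
  qed
  from this[of 0] show ?thesis by simp
qed

lemma ad_nilpotent_subset_self_normalizing: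
  fixes g h :: "'n::finite mat set"
  assumes h: "lie_subalgebra h" "nilpotent h" "normalizer g h = h"
    and E: "E \<subseteq> g" "ad_invariant h E" "\<forall>x\<in>h. gen_null_space x E = E"
  shows "E \<subseteq> h"
proof
  fix v assume "v \<in> E"
  show "v \<in> h"
  proof (rule ccontr)
    assume "v \<notin> h"
    then obtain w where w: "w \<in> E" "w \<notin> h" "\<forall>x\<in>h. comm x w \<in> h"
      using exists_normalizing_mod[OF h(1,2) E(2,3) \<open>v \<in> E\<close>] by blast
    have "comm w y \<in> h" if "y \<in> h" for y
      using w(3) that h(1) M.subspace_neg by (auto simp: comm_swap[of w y] lie_subalgebra_def)
    then have "w \<in> normalizer g h" using w(1) E(1) by (auto simp: normalizer_def)
    then show False using h(3) w(2) by simp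
  qed
qed

section \<open>Fitting decomposition and the identity g = h + [h, g]\<close>

lemma subspace_gen_null_space:
  assumes "M.subspace E"
  shows "M.subspace (gen_null_space x E)"
proof (rule M.subspaceI)
  show "0 \<in> gen_null_space x E"
    using M.subspace_0[OF assms] by (auto simp: gen_null_space_def intro!: exI[of _ 0])
next
  fix a b assume "a \<in> gen_null_space x E" "b \<in> gen_null_space x E"
  then obtain i j where a: "a \<in> E" "(comm x ^^ i) a = 0" and b: "b \<in> E" "(comm x ^^ j) b = 0"
    by (auto simp: gen_null_space_def)
  have "(comm x ^^ (i + j)) (a + b) = 0"
    using comm_power_eq_0_mono[OF a(2), of "i + j"] comm_power_eq_0_mono[OF b(2), of "i + j"]
    by (simp add: module_hom.add[OF module_hom_comm_power])
  then show "a + b \<in> gen_null_space x E"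
    using M.subspace_add[OF assms a(1) b(1)] by (auto simp: gen_null_space_def)
next
  fix c a assume "a \<in> gen_null_space x E"
  then obtain k where a: "a \<in> E" "(comm x ^^ k) a = 0" by (auto simp: gen_null_space_def)
  then have "(comm x ^^ k) (mscale c a) = 0"
    by (simp add: module_hom.scale[OF module_hom_comm_power])
  then show "mscale c a \<in> gen_null_space x E"
    using M.subspace_scale[OF assms a(1)] by (auto simp: gen_null_space_def)
qed

lemma gen_null_space_comm_closed:
  assumes E: "M.subspace E" "ad_invariant {x, y} E"
    and xy: "\<forall>u\<in>gen_null_space x E. comm (comm x y) u \<in> gen_null_space x E"
    and v: "v \<in> gen_null_space x E"
  shows "comm y v \<in> gen_null_space x E"
proof -
  obtain k where "v \<in> E" "(comm x ^^ k) v = 0" using v by (auto simp: gen_null_space_def)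
  then show ?thesis
  proof (induction k arbitrary: v)
    case 0
    then show ?case using E(2) by (auto simp: gen_null_space_def ad_invariant_def intro!: exI[of _ 0])
  next
    case (Suc k)
    have "comm x v \<in> E" "(comm x ^^ k) (comm x v) = 0"
      using Suc.prems E(2) by (auto simp: ad_invariant_def funpow_swap1)
    then have "comm y (comm x v) \<in> gen_null_space x E" by (rule Suc.IH)
    moreover have "v \<in> gen_null_space x E"
      using Suc.prems unfolding gen_null_space_def by blast
    then have "comm (comm x y) v \<in> gen_null_space x E" using xy by blast
    ultimately have "comm x (comm y v) \<in> gen_null_space x E"
      using comm_jacobi[of x y v] M.subspace_add[OF subspace_gen_null_space[OF E(1)]] by simp
    then obtain j where "(comm x ^^ Suc j) (comm y v) = 0"
      by (auto simp: gen_null_space_def funpow_swap1)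
    moreover have "comm y v \<in> E" using Suc.prems(1) E(2) by (auto simp: ad_invariant_def)
    ultimately show ?case unfolding gen_null_space_def by blast
  qed
qed

lemma ad_invariant_gen_null_space:
  fixes h :: "'n::finite mat set"
  assumes h: "lie_subalgebra h" "nilpotent h" "x \<in> h"
    and E: "M.subspace E" "ad_invariant h E"
  shows "ad_invariant h (gen_null_space x E)"
  unfolding ad_invariant_def
proof (intro ballI)
  fix y v assume y: "y \<in> h" and v: "v \<in> gen_null_space x E"
  obtain c where c: "(comm x ^^ c) y = 0"
    using nilpotent_comm_power_eq_0[OF h(2,3) y] .
  txt \<open>Downward induction from (ad x)^c y = 0 to y itself.\<close>
  have "\<forall>u\<in>gen_null_space x E. comm ((comm x ^^ i) y) u \<in> gen_null_space x E" if "i \<le> c" for i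
    using that
  proof (induction rule: inc_induct)
    case base
    then show ?case using c M.subspace_0[OF subspace_gen_null_space[OF E(1)]] by simp
  next
    case (step i)
    have "(comm x ^^ i) y \<in> h" using lie_subalgebra_comm_power[OF h(1,3) y] .
    then have "ad_invariant {x, (comm x ^^ i) y} E"
      using E(2) h(3) by (auto simp: ad_invariant_def)
    then show ?case
      using step.IH gen_null_space_comm_closed[OF E(1)] by simp
  qed
  from this[of 0] v show "comm y v \<in> gen_null_space x E" by simp
qed

lemma subspace_chain_stabilizes:
  assumes "\<And>k. M.subspace (S k)" "\<And>k. S (Suc k) \<subseteq> S k"
  shows "\<exists>k. S (Suc k) = (S k :: 'n::finite mat set)"
proof (rule ccontr)
  assume "\<nexists>k. S (Suc k) = S k"
  then have "S (Suc k) \<subset> S k" for k using assms(2) by blast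
  then have dim_less: "M.dim (S (Suc k)) < M.dim (S k)" for k
    using assms(1) by (metis M.span_eq_iff MF.dim_psubset)
  have "M.dim (S k) + k \<le> M.dim (S 0)" for k
  proof (induction k)
    case (Suc k)
    then show ?case using dim_less[of k] by simp
  qed simp
  from this[of "Suc (M.dim (S 0))"] show False by simp
qed

lemma comm_power_image_stabilizes:
  assumes E: "M.subspace E" "ad_invariant {x} E"
  shows "\<exists>K>0. (comm x ^^ K) ` E = (comm x ^^ (K + K)) ` E"
proof -
  define I where "I k = (comm x ^^ k) ` E" for k
  have I_Suc: "I (Suc k) = comm x ` I k" for k
    by (simp only: I_def image_comp funpow.simps(2))
  have "I (Suc k) \<subseteq> I k" for k
  proof -
    have "I (Suc k) = (comm x ^^ k) ` comm x ` E" by (simp only: I_def image_comp funpow_Suc_right)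
    also have "\<dots> \<subseteq> I k" using E(2) unfolding I_def ad_invariant_def by blast
    finally show ?thesis .
  qed
  moreover have "M.subspace (I k)" for k
    unfolding I_def by (rule module_hom.subspace_image[OF module_hom_comm_power E(1)])
  ultimately obtain k where k: "I (Suc k) = I k"
    using subspace_chain_stabilizes by blast
  have "I (k + j) = I k" for j
  proof (induction j)
    case (Suc j)
    have "I (k + Suc j) = comm x ` I (k + j)" using I_Suc by simp
    also have "\<dots> = comm x ` I k" using Suc.IH by simp
    also have "\<dots> = I k" by (metis I_Suc k)
    finally show ?case .
  qed simp
  from this[of 1] this[of "k + 2"] have "I (Suc k) = I (Suc k + Suc k)"
    by simp
  then show ?thesis unfolding I_def by blast
qed

lemma fitting_decomposition:
  assumes E: "M.subspace E" "ad_invariant {x} E"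
  shows "E \<subseteq> M.span (gen_null_space x E \<union> comm x ` E)"
proof
  fix v assume v: "v \<in> E"
  obtain K where K: "K > 0" "(comm x ^^ K) ` E = (comm x ^^ (K + K)) ` E"
    using comm_power_image_stabilizes[OF E] by blast
  then obtain u where u: "u \<in> E" "(comm x ^^ K) v = (comm x ^^ (K + K)) u"
    using v by blast
  define a where "a = (comm x ^^ K) u"
  have a: "a \<in> E" unfolding a_def using E(2) u(1) by (rule comm_power_in_invariant)
  have "(comm x ^^ K) (v - a) = 0"
    using u(2) by (simp add: a_def funpow_add module_hom.diff[OF module_hom_comm_power])
  then have null_part: "v - a \<in> gen_null_space x E"
    using M.subspace_diff[OF E(1) v a] by (auto simp: gen_null_space_def)
  obtain K' where "K = Suc K'" using gr0_implies_Suc[OF K(1)] by blast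
  then have "a = comm x ((comm x ^^ K') u)" by (simp add: a_def)
  moreover have "(comm x ^^ K') u \<in> E" using E(2) u(1) by (rule comm_power_in_invariant)
  ultimately have image_part: "a \<in> comm x ` E" by blast
  have "(v - a) + a \<in> M.span (gen_null_space x E \<union> comm x ` E)"
    using null_part image_part by (intro M.span_add M.span_base) auto
  then show "v \<in> M.span (gen_null_space x E \<union> comm x ` E)" by simp
qed

lemma invariant_subspace_subset_span_brk:
  fixes g h :: "'n::finite mat set"
  assumes h: "lie_subalgebra h" "nilpotent h" "normalizer g h = h"
    and E: "M.subspace E" "E \<subseteq> g" "ad_invariant h E"
  shows "E \<subseteq> M.span (h \<union> brk h E)"
  using E
proof (induction "M.dim E" arbitrary: E rule: less_induct)
  case less
  show ?case
  proof (cases "\<forall>x\<in>h. gen_null_space x E = E")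
    case True
    then have "E \<subseteq> h" using ad_nilpotent_subset_self_normalizing[OF h less.prems(2,3)] by blast
    then show ?thesis using M.span_superset by blast
  next
    case False
    then obtain x where x: "x \<in> h" and "gen_null_space x E \<noteq> E" by blast
    let ?N = "gen_null_space x E"
    have "ad_invariant {x} E" using less.prems(3) x by (auto simp: ad_invariant_def)
    have N: "M.subspace ?N" "?N \<subseteq> g" "ad_invariant h ?N"
      using subspace_gen_null_space[OF less.prems(1)] less.prems(2)
        ad_invariant_gen_null_space[OF h(1,2) x less.prems(1,3)]
      by (auto simp: gen_null_space_def)
    have "?N \<subset> E" using \<open>?N \<noteq> E\<close> by (auto simp: gen_null_space_def)
    then have "M.dim ?N < M.dim E"
      using N(1) less.prems(1) by (metis M.span_eq_iff MF.dim_psubset)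
    then have "?N \<subseteq> M.span (h \<union> brk h ?N)" using N by (rule less.hyps)
    also have "\<dots> \<subseteq> M.span (h \<union> brk h E)"
      unfolding brk_def by (intro M.span_mono Un_mono subset_refl) (auto simp: gen_null_space_def)
    finally have "?N \<subseteq> M.span (h \<union> brk h E)" .
    moreover have "comm x ` E \<subseteq> brk h E"
      using x by (auto simp: brk_def intro: M.span_base)
    ultimately have "M.span (?N \<union> comm x ` E) \<subseteq> M.span (h \<union> brk h E)"
      using M.span_superset[of "h \<union> brk h E"] by (intro M.span_minimal M.subspace_span) blast
    with fitting_decomposition[OF less.prems(1) \<open>ad_invariant {x} E\<close>] show ?thesis
      by (rule subset_trans)
  qed
qed

lemma cartan_subalgebra_span_brk:
  assumes "lie_subalgebra g" "cartan_subalgebra h g"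
  shows "g \<subseteq> M.span (h \<union> brk h g)"
proof (rule invariant_subspace_subset_span_brk[where g = g])
  show "lie_subalgebra h" "nilpotent h" "normalizer g h = h"
    using assms(2) by (auto simp: cartan_subalgebra_def)
  show "M.subspace g" "g \<subseteq> g" "ad_invariant h g"
    using assms by (auto simp: cartan_subalgebra_def lie_subalgebra_def ad_invariant_def)
qed

section \<open>The module W \<otimes> g\<close>

lemma tens_add_right: "tens w (a + b) = tens w a + tens w b"
  by (simp add: tens_def vec_eq_iff M.scale_right_distrib)

lemma tens_mscale_right: "tens w (mscale c a) = tscale c (tens w a)"
  by (simp add: tens_def tscale_def vec_eq_iff M.scale_left_commute mult.commute)

lemma tens_uminus_right: "tens w (- a) = - tens w a"
  by (simp add: tens_def vec_eq_iff mscale_def)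

lemma tens_0_right [simp]: "tens w (0::'n::finite mat) = (0 :: complex^'n^'n^'m::finite)"
  by (simp add: tens_def mscale_def vec_eq_iff)

lemma sum_mscale_left: "(\<Sum>j\<in>A. mscale (c j) a) = mscale (\<Sum>j\<in>A. c j) (a::'n::finite mat)"
  by (simp add: vec_eq_iff sum_component mscale_def sum_distrib_right)

lemma tact_tens: "tact \<rho> x (tens w y) = tens (\<rho> x *v w) y + tens w (comm x y)"
proof -
  have "tact \<rho> x (tens w y) $ k = (tens (\<rho> x *v w) y + tens w (comm x y)) $ k" for k
  proof -
    have "(\<Sum>j\<in>UNIV. mscale (\<rho> x $ k $ j) (tens w y $ j)) = mscale ((\<rho> x *v w) $ k) y"
      by (simp add: tens_def sum_mscale_left matrix_vector_mult_def)
    then show ?thesis by (simp add: tact_def tens_def comm_mscale_right)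
  qed
  then show ?thesis by (simp add: vec_eq_iff)
qed

lemma tact_add: "tact \<rho> x (A + B) = tact \<rho> x A + tact \<rho> x B"
  by (simp add: tact_def vec_eq_iff M.scale_right_distrib sum.distrib comm_add_right algebra_simps)

lemma tact_tscale: "tact \<rho> x (tscale c A) = tscale c (tact \<rho> x A)"
  by (simp add: tact_def tscale_def vec_eq_iff M.scale_right_distrib M.scale_sum_right
      M.scale_left_commute comm_mscale_right mult.commute)

lemma tensor_space_mono: "L \<subseteq> L' \<Longrightarrow> tensor_space L \<subseteq> tensor_space L'"
  unfolding tensor_space_def by (intro T.span_mono) blast

lemma tensor_space_tact_closed:
  assumes g: "lie_subalgebra g" and x: "x \<in> g"
  shows "T \<in> tensor_space g \<Longrightarrow> tact \<rho> x T \<in> tensor_space g"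
  unfolding tensor_space_def
proof (induction rule: T.span_induct)
  case base
  show ?case
    by (rule T.subspaceI) (auto simp: tact_add tact_tscale T.span_add T.span_scale
        tact_tscale[of \<rho> x 0 0, simplified] T.span_zero)
next
  case (step S)
  then obtain w y where S: "S = tens w y" "y \<in> g" by blast
  then have "comm x y \<in> g" using g x by (simp add: lie_subalgebra_def)
  then have "tens (\<rho> x *v w) y + tens w (comm x y) \<in> T.span {tens w y | w y. y \<in> g}"
    using S(2) by (intro T.span_add T.span_base) auto
  then show ?case by (simp add: S(1) tact_tens)
qed

lemma subspace_tensor_factor:
  assumes "T.subspace S"
  shows "M.subspace {y. \<forall>w. tens w y \<in> S}"
  using assms by (auto intro!: M.subspaceI simp: tens_add_right tens_mscale_right
      T.subspace_0 T.subspace_add T.subspace_scale)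

lemma tensor_space_subset_submodule:
  assumes S: "T.subspace S" "tensor_space h \<subseteq> S" "\<forall>x\<in>g. \<forall>T\<in>S. tact \<rho> x T \<in> S"
    and g: "g \<subseteq> M.span (h \<union> brk h g)"
  shows "tensor_space g \<subseteq> S"
proof -
  define G where "G = {y. \<forall>w. tens w y \<in> S}"
  have h_G: "h \<subseteq> G"
    using S(2) unfolding G_def tensor_space_def by (blast intro: T.span_base)
  have "comm a v \<in> G" if a: "a \<in> h" and v: "v \<in> g" for a v
  proof -
    have "tens w (comm v a) \<in> S" for w
    proof -
      have "tens w a \<in> S" "tens (\<rho> v *v w) a \<in> S" using h_G a by (auto simp: G_def)
      then have "tens (\<rho> v *v w) a + tens w (comm v a) \<in> S" "tens (\<rho> v *v w) a \<in> S"
        using S(3) v by (auto simp flip: tact_tens)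
      from T.subspace_diff[OF S(1) this] show ?thesis by simp
    qed
    then show ?thesis
      using T.subspace_neg[OF S(1)] by (auto simp: G_def comm_swap[of a v] tens_uminus_right)
  qed
  then have "brk h g \<subseteq> G"
    unfolding brk_def using subspace_tensor_factor[OF S(1)]
    by (intro M.span_minimal) (auto simp: G_def)
  with h_G have "M.span (h \<union> brk h g) \<subseteq> G"
    using subspace_tensor_factor[OF S(1)] by (intro M.span_minimal) (auto simp: G_def)
  with g have "g \<subseteq> G" by blast
  then show ?thesis
    unfolding tensor_space_def using S(1) by (intro T.span_minimal) (auto simp: G_def)
qed

theorem lemma3p8:
  fixes g h :: "'n::finite mat set" and \<rho> :: "'n mat \<Rightarrow> 'm::finite mat"
  assumes "semisimple g"
    and "cartan_subalgebra h g"
    and "lie_rep g \<rho>"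
  shows "generated_submodule g \<rho> (tensor_space h :: (complex^'n^'n^'m) set)
           = tensor_space g"
proof -
  have g: "lie_subalgebra g" using assms(1) by (simp add: semisimple_def)
  have "h \<subseteq> g" using assms(2) by (simp add: cartan_subalgebra_def)
  then have "generated_submodule g \<rho> (tensor_space h) \<subseteq> tensor_space g"
    unfolding generated_submodule_def
    using tensor_space_mono tensor_space_tact_closed[OF g]
    by (intro Inter_lower) (auto simp: tensor_space_def)
  moreover have "tensor_space g \<subseteq> generated_submodule g \<rho> (tensor_space h)"
    unfolding generated_submodule_def
    using tensor_space_subset_submodule cartan_subalgebra_span_brk[OF g assms(2)] by blast
  ultimately show ?thesis by blast
qed

end
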